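(* Let $G$ be a finitely generated residually finite group and $\phi\in\operatorname{Aut}(G)$. If $\operatorname{Stab}_\phi(g)$ is infinite for some $g\in G$, then $R(\phi)=\infty$.
   Context: For an endomorphism $\phi$ of $G$, $R(\phi)\in\mathbb{N}\cup\{\infty\}$ is the number of classes of the relation $x\sim hx\phi(h)^{-1}$ ($h\in G$). The $\phi$-stabiliser of $g\in G$ is $\operatorname{Stab}_\phi(g)=\{b\in G\mid g=bg\phi(b)^{-1}\}$. *)

theory Defs
  imports "HOL-Algebra.Algebra"
begin

definition fin_gen_group :: "('a, 'b) monoid_scheme \<Rightarrow> bool" where
  "fin_gen_group G \<longleftrightarrow> (\<exists>S. finite S \<and> S \<subseteq> carrier G \<and> generate G S = carrier G)"

definition residually_finite :: "('a, 'b) monoid_scheme \<Rightarrow> bool" where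
  "residually_finite G \<longleftrightarrow>
     (\<forall>g\<in>carrier G. g \<noteq> \<one>\<^bsub>G\<^esub> \<longrightarrow>
        (\<exists>N. N \<lhd> G \<and> finite (rcosets\<^bsub>G\<^esub> N) \<and> g \<notin> N))"

definition twisted_conj :: "('a, 'b) monoid_scheme \<Rightarrow> ('a \<Rightarrow> 'a) \<Rightarrow> ('a \<times> 'a) set" where
  "twisted_conj G \<phi> = {(x, y). x \<in> carrier G \<and> y \<in> carrier G \<and>
      (\<exists>h\<in>carrier G. y = h \<otimes>\<^bsub>G\<^esub> x \<otimes>\<^bsub>G\<^esub> inv\<^bsub>G\<^esub> (\<phi> h))}"

text \<open>The set of Reidemeister (twisted conjugacy) classes; R(phi) is its cardinality,
  and R(phi) = infinity means this set is infinite.\<close>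
definition reidemeister_classes :: "('a, 'b) monoid_scheme \<Rightarrow> ('a \<Rightarrow> 'a) \<Rightarrow> 'a set set" where
  "reidemeister_classes G \<phi> = carrier G // twisted_conj G \<phi>"

definition twisted_stab :: "('a, 'b) monoid_scheme \<Rightarrow> ('a \<Rightarrow> 'a) \<Rightarrow> 'a \<Rightarrow> 'a set" where
  "twisted_stab G \<phi> g = {b \<in> carrier G. g = b \<otimes>\<^bsub>G\<^esub> g \<otimes>\<^bsub>G\<^esub> inv\<^bsub>G\<^esub> (\<phi> b)}"

end

theory Submission
  imports Defs
begin

text \<open>Suppose \<open>R(\<phi>)\<close> is finite. For the twisted conjugation action of a finite group \<open>Q\<close> with
  endomorphism \<open>\<psi>\<close>, the class equation reads \<open>\<Sum> 1 / |Stab\<^sub>\<psi>(x)| = 1\<close>, summed over one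
  representative \<open>x\<close> per twisted class. Egyptian fractions with a bounded number of terms have
  bounded denominators, so if \<open>R(\<psi>) \<le> R(\<phi>)\<close> then every stabiliser in \<open>Q\<close> has at most \<open>B\<close>
  elements, for some \<open>B\<close> depending only on \<open>R(\<phi>)\<close>.
  Residual finiteness separates \<open>B + 1\<close> elements of \<open>Stab\<^sub>\<phi>(g)\<close> modulo a normal subgroup \<open>N\<close>
  of finite index. A finitely generated group has only finitely many subgroups of a given
  index, so the preimages of \<open>N\<close> under the powers of \<open>\<phi>\<close> are finitely many; their
  intersection \<open>M\<close> is \<open>\<phi>\<close>-invariant, normal, of finite index, and still separates them. On
  \<open>G/M\<close> the map \<open>\<phi>\<close> induces \<open>\<psi>\<close> with \<open>R(\<psi>) \<le> R(\<phi>)\<close>, yet \<open>Stab\<^sub>\<psi>(gM)\<close> contains \<open>B + 1\<close>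
  elements.\<close>

section \<open>Egyptian fractions\<close>

lemma exists_ge_average:
  fixes f :: "'x \<Rightarrow> real"
  assumes "finite A" "A \<noteq> {}" "card A \<le> n" "0 \<le> sum f A"
  shows "\<exists>a\<in>A. sum f A / real n \<le> f a"
proof (rule ccontr)
  assume "\<not> ?thesis"
  then have "sum f A < real (card A) * (sum f A / real n)"
    using sum_strict_mono[OF assms(1,2), of f "\<lambda>_. sum f A / real n"] by (auto simp: not_le)
  also have "\<dots> \<le> real n * (sum f A / real n)"
    using assms(3,4) by (intro mult_right_mono) auto
  also have "\<dots> \<le> sum f A" using assms(4) by simp
  finally show False by simp
qed

lemma egyptian_fraction_denominators_bounded:
  fixes q :: real
  assumes "q > 0"
  shows "\<exists>B::nat. \<forall>(A::'x set) s. finite A \<longrightarrow> card A \<le> k \<longrightarrow> (\<forall>a\<in>A. 0 < s a) \<longrightarrow>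
           (\<Sum>a\<in>A. 1 / real (s a)) = q \<longrightarrow> (\<forall>a\<in>A. s a \<le> B)"
  using assms
proof (induction k arbitrary: q)
  case 0
  then show ?case by auto
next
  case (Suc k)
  have "\<forall>c. \<exists>B::nat. 0 < q - 1 / real c \<longrightarrow> (\<forall>(A::'x set) s. finite A \<longrightarrow> card A \<le> k \<longrightarrow>
          (\<forall>a\<in>A. 0 < s a) \<longrightarrow> (\<Sum>a\<in>A. 1 / real (s a)) = q - 1 / real c \<longrightarrow> (\<forall>a\<in>A. s a \<le> B))"
    using Suc.IH by blast
  then obtain Bc where Bc: "\<And>c (A::'x set) s. 0 < q - 1 / real c \<Longrightarrow> finite A \<Longrightarrow> card A \<le> k \<Longrightarrow>
      \<forall>a\<in>A. 0 < s a \<Longrightarrow> (\<Sum>a\<in>A. 1 / real (s a)) = q - 1 / real c \<Longrightarrow> \<forall>a\<in>A. s a \<le> Bc c"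
    by metis
  \<comment> \<open>The largest term is at least the average \<open>q / (k + 1)\<close>, so its denominator is at
    most \<open>c0\<close>; the other terms sum to \<open>q - 1 / c\<close> for one of the finitely many \<open>c \<le> c0\<close>.\<close>
  define c0 where "c0 = nat \<lfloor>real (Suc k) / q\<rfloor>"
  show ?case
  proof (intro exI allI impI ballI)
    fix A :: "'x set" and s a
    assume A: "finite A" "card A \<le> Suc k" and pos: "\<forall>a\<in>A. 0 < s a"
      and sum_q: "(\<Sum>a\<in>A. 1 / real (s a)) = q" and "a \<in> A"
    have "A \<noteq> {}" using sum_q Suc.prems by auto
    then obtain a0 where a0: "a0 \<in> A" "q / real (Suc k) \<le> 1 / real (s a0)"
      using exists_ge_average[OF A(1) _ A(2), of "\<lambda>a. 1 / real (s a)"] sum_q Suc.prems by auto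
    then have "real (s a0) \<le> real (Suc k) / q"
      using pos Suc.prems by (simp add: field_simps)
    then have small: "s a0 \<le> c0" unfolding c0_def by linarith
    show "s a \<le> max c0 (Max (Bc ` {..c0}))"
    proof (cases "a = a0")
      case True
      then show ?thesis using small by simp
    next
      case False
      let ?A = "A - {a0}"
      have rest: "(\<Sum>a\<in>?A. 1 / real (s a)) = q - 1 / real (s a0)"
        using sum_q a0(1) A(1) by (simp add: sum_diff1)
      have "0 < (\<Sum>a\<in>?A. 1 / real (s a))"
        using False \<open>a \<in> A\<close> A(1) pos by (intro sum_pos2[of ?A a]) auto
      then have "s a \<le> Bc (s a0)"
        using Bc[of "s a0" ?A s] rest A a0(1) pos False \<open>a \<in> A\<close> by auto
      also have "\<dots> \<le> Max (Bc ` {..c0})" using small by (intro Max_ge) auto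
      finally show ?thesis by simp
    qed
  qed
qed

section \<open>Twisted conjugation in finite groups\<close>

definition twisted_action :: "('a, 'b) monoid_scheme \<Rightarrow> ('a \<Rightarrow> 'a) \<Rightarrow> 'a \<Rightarrow> 'a \<Rightarrow> 'a" where
  "twisted_action G \<psi> h = (\<lambda>x\<in>carrier G. h \<otimes>\<^bsub>G\<^esub> x \<otimes>\<^bsub>G\<^esub> inv\<^bsub>G\<^esub> (\<psi> h))"

lemma (in group) group_action_twisted_action:
  assumes \<psi>: "\<psi> \<in> hom G G"
  shows "group_action G (carrier G) (twisted_action G \<psi>)"
proof -
  have \<psi>_carrier: "\<And>h. h \<in> carrier G \<Longrightarrow> \<psi> h \<in> carrier G"
    using hom_in_carrier[OF \<psi>] .
  have bij: "twisted_action G \<psi> h \<in> Bij (carrier G)" if h: "h \<in> carrier G" for h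
  proof -
    have "bij_betw (twisted_action G \<psi> h) (carrier G) (carrier G)"
    proof (rule bij_betw_byWitness[where f' = "\<lambda>z. inv h \<otimes> z \<otimes> \<psi> h"])
      show "\<forall>x\<in>carrier G. inv h \<otimes> twisted_action G \<psi> h x \<otimes> \<psi> h = x"
        using h \<psi>_carrier[OF h] by (simp add: twisted_action_def m_assoc[symmetric]) (simp add: m_assoc)
      show "\<forall>z\<in>carrier G. twisted_action G \<psi> h (inv h \<otimes> z \<otimes> \<psi> h) = z"
        using h \<psi>_carrier[OF h] by (simp add: twisted_action_def m_assoc[symmetric]) (simp add: m_assoc)
    qed (use h \<psi>_carrier[OF h] in \<open>auto simp: twisted_action_def\<close>)
    then show ?thesis by (simp add: Bij_def twisted_action_def)
  qed
  have "twisted_action G \<psi> \<in> hom G (BijGroup (carrier G))"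
  proof (rule homI)
    fix a b assume a: "a \<in> carrier G" and b: "b \<in> carrier G"
    show "twisted_action G \<psi> (a \<otimes> b)
          = twisted_action G \<psi> a \<otimes>\<^bsub>BijGroup (carrier G)\<^esub> twisted_action G \<psi> b"
    proof -
      have "twisted_action G \<psi> (a \<otimes> b) x
            = compose (carrier G) (twisted_action G \<psi> a) (twisted_action G \<psi> b) x" for x
        using a b \<psi>_carrier[OF a] \<psi>_carrier[OF b]
        by (simp add: compose_def twisted_action_def hom_mult[OF \<psi>] inv_mult_group m_assoc)
      then show ?thesis
        using a b bij by (simp add: BijGroup_def fun_eq_iff)
    qed
  qed (simp add: bij BijGroup_def)
  then show ?thesis
    by (simp add: group_action_def group_hom_def group_hom_axioms_def group_BijGroup is_group)
qed

lemma (in group) orbits_twisted_action: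
  assumes "\<psi> \<in> hom G G"
  shows "orbits G (carrier G) (twisted_action G \<psi>) = reidemeister_classes G \<psi>"
proof -
  have "orbit G (twisted_action G \<psi>) x = twisted_conj G \<psi> `` {x}" if "x \<in> carrier G" for x
    using that hom_in_carrier[OF assms]
    by (auto simp: orbit_def twisted_action_def twisted_conj_def)
  then show ?thesis
    by (auto simp: orbits_def reidemeister_classes_def quotient_def)
qed

lemma stabilizer_twisted_action:
  "x \<in> carrier G \<Longrightarrow> stabilizer G (twisted_action G \<psi>) x = twisted_stab G \<psi> x"
  by (auto simp: stabilizer_def twisted_action_def twisted_stab_def)

lemma (in group_action) card_orbit_pos:
  assumes "finite (carrier G)" "x \<in> E"
  shows "card (orbit G \<phi> x) > 0"
proof -
  have "orbit G \<phi> x = (\<lambda>g. \<phi> g x) ` carrier G"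
    unfolding orbit_def by blast
  then have "finite (orbit G \<phi> x)"
    using assms(1) by simp
  then show ?thesis
    using orbit_refl[OF assms(2)] by (auto simp: card_gt_0_iff)
qed

lemma (in group_action) card_stabilizer_eq_div:
  assumes "finite (carrier G)" "x \<in> E"
  shows "card (stabilizer G \<phi> x) = order G div card (orbit G \<phi> x)"
  using card_orbit_pos[OF assms]
  unfolding orbit_stabilizer_theorem[OF assms(2), symmetric] by simp

lemma (in group_action) card_stabilizer_pos:
  assumes "finite (carrier G)" "x \<in> E"
  shows "card (stabilizer G \<phi> x) > 0"
proof -
  have "\<one> \<in> stabilizer G \<phi> x"
    using subgroup.one_closed[OF stabilizer_subgroup[OF assms(2)]] .
  moreover have "finite (stabilizer G \<phi> x)"
    by (rule finite_subset[OF stabilizer_subset assms(1)])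
  ultimately show ?thesis by (auto simp: card_gt_0_iff)
qed

lemma (in group_action) sum_inverse_card_stabilizers:
  assumes "finite (carrier G)" "finite E"
  shows "(\<Sum>orb\<in>orbits G E \<phi>. 1 / real (order G div card orb)) = real (card E) / real (order G)"
proof -
  have "1 / real (order G div card orb) = real (card orb) / real (order G)"
    if orb: "orb \<in> orbits G E \<phi>" for orb
  proof -
    obtain x where x: "x \<in> E" "orb = orbit G \<phi> x"
      using orb unfolding orbits_def by blast
    have orb_pos: "card orb > 0"
      using card_orbit_pos[OF assms(1) x(1)] x(2) by simp
    have "order G = card orb * (order G div card orb)"
      using orbit_stabilizer_theorem[OF x(1)] card_stabilizer_eq_div[OF assms(1) x(1)] x(2) by simp
    then have "real (order G) = real (card orb) * real (order G div card orb)"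
      by (metis of_nat_mult)
    then show ?thesis
      using orb_pos by (simp add: field_simps)
  qed
  then have "(\<Sum>orb\<in>orbits G E \<phi>. 1 / real (order G div card orb))
             = (\<Sum>orb\<in>orbits G E \<phi>. \<Sum>x\<in>orb. 1 / real (order G))"
    by (simp add: divide_inverse)
  also have "\<dots> = (\<Sum>x\<in>E. 1 / real (order G))"
    by (rule disjoint_sum[OF assms(2)])
  finally show ?thesis by simp
qed

lemma twisted_stab_card_bounded:
  "\<exists>B. \<forall>(G::('a, 'b) monoid_scheme) \<psi> x. group G \<longrightarrow> finite (carrier G) \<longrightarrow> \<psi> \<in> hom G G \<longrightarrow>
         card (reidemeister_classes G \<psi>) \<le> k \<longrightarrow> x \<in> carrier G \<longrightarrow> card (twisted_stab G \<psi> x) \<le> B"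
proof -
  obtain B where B: "\<forall>(A::'a set set) s. finite A \<longrightarrow> card A \<le> k \<longrightarrow> (\<forall>a\<in>A. 0 < s a) \<longrightarrow>
      (\<Sum>a\<in>A. 1 / real (s a)) = 1 \<longrightarrow> (\<forall>a\<in>A. s a \<le> B)"
    using egyptian_fraction_denominators_bounded[of 1 k] by auto
  have "card (twisted_stab G \<psi> x) \<le> B"
    if G: "group G" "finite (carrier G)" and \<psi>: "\<psi> \<in> hom G G"
      and k: "card (reidemeister_classes G \<psi>) \<le> k" and x: "x \<in> carrier G"
    for G :: "('a, 'b) monoid_scheme" and \<psi> x
  proof -
    interpret group G by (rule G(1))
    interpret group_action G "carrier G" "twisted_action G \<psi>"
      by (rule group_action_twisted_action[OF \<psi>])
    let ?s = "\<lambda>orb. order G div card orb"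
    have s_orbit: "?s (orbit G (twisted_action G \<psi>) y) = card (twisted_stab G \<psi> y)"
      if "y \<in> carrier G" for y
      using card_stabilizer_eq_div[OF G(2) that] stabilizer_twisted_action[OF that] by simp
    have orbits_eq: "orbits G (carrier G) (twisted_action G \<psi>) = orbit G (twisted_action G \<psi>) ` carrier G"
      unfolding orbits_def by blast
    have "finite (orbits G (carrier G) (twisted_action G \<psi>))"
      using G(2) orbits_eq by simp
    moreover have "\<forall>orb\<in>orbits G (carrier G) (twisted_action G \<psi>). 0 < ?s orb"
    proof
      fix orb assume "orb \<in> orbits G (carrier G) (twisted_action G \<psi>)"
      then obtain y where y: "y \<in> carrier G" "orb = orbit G (twisted_action G \<psi>) y"
        using orbits_eq by blast
      then show "0 < ?s orb"
        using s_orbit[OF y(1)] card_stabilizer_pos[OF G(2) y(1)] stabilizer_twisted_action[OF y(1)]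
        by simp
    qed
    moreover have "(\<Sum>orb\<in>orbits G (carrier G) (twisted_action G \<psi>). 1 / real (?s orb)) = 1"
      using sum_inverse_card_stabilizers[OF G(2) G(2)] G(2) x by (auto simp: order_def)
    moreover have "orbit G (twisted_action G \<psi>) x \<in> orbits G (carrier G) (twisted_action G \<psi>)"
      using x orbits_eq by blast
    ultimately show ?thesis
      using B k s_orbit[OF x] orbits_twisted_action[OF \<psi>] by metis
  qed
  then show ?thesis by blast
qed

section \<open>Subgroups of finite index\<close>

lemma bij_betw_images_same_fibres:
  assumes "\<And>x y. x \<in> A \<Longrightarrow> y \<in> A \<Longrightarrow> f x = f y \<longleftrightarrow> g x = g y"
  shows "bij_betw (\<lambda>u. g (inv_into A f u)) (f ` A) (g ` A)"
proof -
  have g_inv_into: "g (inv_into A f (f x)) = g x" if "x \<in> A" for x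
    using assms that by (metis f_inv_into_f imageI inv_into_into)
  show ?thesis
    unfolding bij_betw_def inj_on_def
  proof (intro conjI ballI impI)
    fix u v assume "u \<in> f ` A" "v \<in> f ` A" "g (inv_into A f u) = g (inv_into A f v)"
    then show "u = v" using assms g_inv_into by auto
  next
    show "(\<lambda>u. g (inv_into A f u)) ` f ` A = g ` A"
      using g_inv_into by (auto simp: image_image)
  qed
qed

lemma funpow_hom: "f \<in> hom G G \<Longrightarrow> f ^^ n \<in> hom G G"
proof (induction n)
  case 0
  then show ?case using id_iso[of G] unfolding iso_def id_def by simp
next
  case (Suc n)
  then have "f \<circ> f ^^ n \<in> hom G G" using hom_compose by blast
  then show ?case by (simp only: funpow.simps(2))
qed

lemma twisted_stab_subset: "twisted_stab G \<phi> g \<subseteq> carrier G"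
  unfolding twisted_stab_def by (rule Collect_restrict)

lemma (in group) rcos_eq_iff:
  assumes "subgroup H G" "x \<in> carrier G" "y \<in> carrier G"
  shows "H #> x = H #> y \<longleftrightarrow> x \<otimes> inv y \<in> H"
proof -
  have "H #> x = H #> y \<longleftrightarrow> x \<in> H #> y"
    using assms repr_independence[of x H y] repr_independenceD[of H x y] by metis
  then show ?thesis
    using subgroup.rcos_module[OF assms(1) is_group assms(3,2)] by simp
qed

lemma (in group) rcosets_classifier:
  assumes "subgroup H G"
    and "\<And>x y. x \<in> carrier G \<Longrightarrow> y \<in> carrier G \<Longrightarrow> x \<otimes> inv y \<in> H \<longleftrightarrow> c x = c y"
  shows "finite (rcosets H) \<longleftrightarrow> finite (c ` carrier G)"
    and "card (rcosets H) = card (c ` carrier G)"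
proof -
  have "rcosets H = (\<lambda>x. H #> x) ` carrier G"
    unfolding RCOSETS_def by blast
  moreover have "bij_betw (\<lambda>u. c (inv_into (carrier G) (\<lambda>x. H #> x) u))
      ((\<lambda>x. H #> x) ` carrier G) (c ` carrier G)"
    using assms rcos_eq_iff by (intro bij_betw_images_same_fibres) simp
  ultimately show "finite (rcosets H) \<longleftrightarrow> finite (c ` carrier G)"
    and "card (rcosets H) = card (c ` carrier G)"
    by (simp_all add: bij_betw_finite bij_betw_same_card)
qed

lemma (in group) normal_Inter_finite_index:
  assumes "finite \<N>" and \<N>: "\<And>N. N \<in> \<N> \<Longrightarrow> N \<lhd> G \<and> finite (rcosets N)"
  shows "carrier G \<inter> \<Inter>\<N> \<lhd> G" and "finite (rcosets (carrier G \<inter> \<Inter>\<N>))"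
proof -
  have sub: "subgroup N G" if "N \<in> \<N>" for N
    using \<N>[OF that] normal_imp_subgroup by blast
  have "subgroup (\<Inter>(insert (carrier G) \<N>)) G"
    using sub subgroup_self by (intro subgroups_Inter) auto
  then have sg: "subgroup (carrier G \<inter> \<Inter>\<N>) G" by simp
  show "carrier G \<inter> \<Inter>\<N> \<lhd> G"
  proof (rule normal_invI[OF sg])
    fix x h assume "x \<in> carrier G" "h \<in> carrier G \<inter> \<Inter>\<N>"
    then show "x \<otimes> h \<otimes> inv x \<in> carrier G \<inter> \<Inter>\<N>"
      using normal_invE(2)[OF conjunct1[OF \<N>]] by simp
  qed
  let ?c = "\<lambda>x. \<lambda>N\<in>\<N>. N #> x"
  have "finite (?c ` carrier G)"
  proof (rule finite_subset)
    show "?c ` carrier G \<subseteq> \<N> \<rightarrow>\<^sub>E (\<Union>N\<in>\<N>. rcosets N)"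
      using rcosetsI[OF subgroup.subset[OF sub]] by auto
    show "finite (\<N> \<rightarrow>\<^sub>E (\<Union>N\<in>\<N>. rcosets N))"
      using assms by (intro finite_PiE) auto
  qed
  moreover have "x \<otimes> inv y \<in> carrier G \<inter> \<Inter>\<N> \<longleftrightarrow> ?c x = ?c y"
    if "x \<in> carrier G" "y \<in> carrier G" for x y
  proof -
    have "x \<otimes> inv y \<in> carrier G \<inter> \<Inter>\<N> \<longleftrightarrow> (\<forall>N\<in>\<N>. N #> x = N #> y)"
      using that rcos_eq_iff[OF sub] by auto
    also have "\<dots> \<longleftrightarrow> ?c x = ?c y"
      by (auto simp: fun_eq_iff restrict_def)
    finally show ?thesis .
  qed
  ultimately show "finite (rcosets (carrier G \<inter> \<Inter>\<N>))"
    using rcosets_classifier(1)[OF sg, of ?c] by simp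
qed

lemma (in group) inj_on_rcos_subgroup:
  assumes "subgroup M G" "subgroup N G" "M \<subseteq> N" "T \<subseteq> carrier G" "inj_on (\<lambda>t. N #> t) T"
  shows "inj_on (\<lambda>t. M #> t) T"
proof (rule inj_onI)
  fix t t' assume t: "t \<in> T" "t' \<in> T" and "M #> t = M #> t'"
  then have "t \<otimes> inv t' \<in> N"
    using rcos_eq_iff[OF assms(1)] assms(3,4) by blast
  then have "N #> t = N #> t'"
    using rcos_eq_iff[OF assms(2)] assms(4) t by blast
  then show "t = t'" using inj_onD[OF assms(5)] t by blast
qed

lemma (in group) subgroup_preimage:
  assumes "f \<in> hom G H" "group H" "subgroup N H"
  shows "subgroup {x \<in> carrier G. f x \<in> N} G"
proof -
  interpret f: group_hom G H f
    using assms by (simp add: group_hom_def group_hom_axioms_def is_group)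
  show ?thesis
    using subgroup.one_closed[OF assms(3)] subgroup.m_closed[OF assms(3)]
      subgroup.m_inv_closed[OF assms(3)]
    by (intro subgroupI) auto
qed

lemma (in group) normal_preimage:
  assumes "f \<in> hom G H" "group H" "N \<lhd> H"
  shows "{x \<in> carrier G. f x \<in> N} \<lhd> G"
proof -
  interpret f: group_hom G H f
    using assms by (simp add: group_hom_def group_hom_axioms_def is_group)
  show ?thesis
    using subgroup_preimage[OF assms(1,2) normal_imp_subgroup[OF assms(3)]]
      normal.inv_op_closed2[OF assms(3)]
    by (intro normal_invI) auto
qed

lemma (in group) index_preimage_le:
  assumes f: "f \<in> hom G H" and H: "group H" and N: "subgroup N H" "finite (rcosets\<^bsub>H\<^esub> N)"
  shows "finite (rcosets {x \<in> carrier G. f x \<in> N})"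
    and "card (rcosets {x \<in> carrier G. f x \<in> N}) \<le> card (rcosets\<^bsub>H\<^esub> N)"
proof -
  interpret f: group_hom G H f
    using f H by (simp add: group_hom_def group_hom_axioms_def is_group)
  let ?c = "\<lambda>x. N #>\<^bsub>H\<^esub> f x"
  have classifies: "x \<otimes> inv y \<in> {x \<in> carrier G. f x \<in> N} \<longleftrightarrow> ?c x = ?c y"
    if "x \<in> carrier G" "y \<in> carrier G" for x y
    using that group.rcos_eq_iff[OF H N(1)] by simp
  have image: "?c ` carrier G \<subseteq> rcosets\<^bsub>H\<^esub> N"
    using group.rcosetsI[OF H subgroup.subset[OF N(1)]] by auto
  note index = rcosets_classifier[OF subgroup_preimage[OF f H N(1)] classifies]
  show "finite (rcosets {x \<in> carrier G. f x \<in> N})"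
    using index(1) finite_subset[OF image N(2)] by simp
  show "card (rcosets {x \<in> carrier G. f x \<in> N}) \<le> card (rcosets\<^bsub>H\<^esub> N)"
    using index(2) card_mono[OF N(2) image] by simp
qed

lemma (in group) residually_finite_separates:
  assumes "residually_finite G" "finite T" "T \<subseteq> carrier G"
  obtains N where "N \<lhd> G" "finite (rcosets N)" "inj_on (\<lambda>t. N #> t) T"
proof -
  have "\<exists>N. N \<lhd> G \<and> finite (rcosets N) \<and> t \<otimes> inv t' \<notin> N"
    if "t \<in> T" "t' \<in> T" "t \<noteq> t'" for t t'
  proof -
    have "t \<otimes> inv t' \<noteq> \<one>"
      using that assms(3) inv_equality by fastforce
    then show ?thesis
      using assms(1) that assms(3) unfolding residually_finite_def by blast
  qed
  then obtain Nf where Nf: "\<And>t t'. t \<in> T \<Longrightarrow> t' \<in> T \<Longrightarrow> t \<noteq> t' \<Longrightarrow>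
      Nf t t' \<lhd> G \<and> finite (rcosets (Nf t t')) \<and> t \<otimes> inv t' \<notin> Nf t t'"
    by metis
  define \<N> where "\<N> = {Nf t t' | t t'. t \<in> T \<and> t' \<in> T \<and> t \<noteq> t'}"
  have "finite \<N>"
  proof (rule finite_subset)
    show "\<N> \<subseteq> (\<lambda>(t, t'). Nf t t') ` (T \<times> T)"
      unfolding \<N>_def by auto
  qed (use assms(2) in simp)
  then have N: "carrier G \<inter> \<Inter>\<N> \<lhd> G" "finite (rcosets (carrier G \<inter> \<Inter>\<N>))"
    using normal_Inter_finite_index Nf unfolding \<N>_def by blast+
  moreover have "inj_on (\<lambda>t. (carrier G \<inter> \<Inter>\<N>) #> t) T"
  proof (rule inj_onI, rule ccontr)
    fix t t' assume t: "t \<in> T" "t' \<in> T" and eq: "(carrier G \<inter> \<Inter>\<N>) #> t = (carrier G \<inter> \<Inter>\<N>) #> t'"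
      and "t \<noteq> t'"
    then have "t \<otimes> inv t' \<in> Nf t t'"
      using rcos_eq_iff[OF normal_imp_subgroup[OF N(1)]] assms(3) unfolding \<N>_def by blast
    then show False using Nf t \<open>t \<noteq> t'\<close> by blast
  qed
  ultimately show ?thesis using that by blast
qed

text \<open>\<open>{..<m}\<close> stands for the right cosets of a subgroup of index \<open>m\<close>, so that the
  coset actions of different subgroups of the same index live on one finite set.\<close>

definition right_action :: "('a, 'b) monoid_scheme \<Rightarrow> nat \<Rightarrow> ('a \<Rightarrow> nat \<Rightarrow> nat) \<Rightarrow> bool" where
  "right_action G m \<rho> \<longleftrightarrow>
     (\<forall>g\<in>carrier G. \<rho> g \<in> {..<m} \<rightarrow>\<^sub>E {..<m}) \<and> \<rho> \<one>\<^bsub>G\<^esub> = (\<lambda>i\<in>{..<m}. i) \<and>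
     (\<forall>g\<in>carrier G. \<forall>h\<in>carrier G. \<rho> (g \<otimes>\<^bsub>G\<^esub> h) = compose {..<m} (\<rho> h) (\<rho> g))"

lemma (in group) right_action_eq_on_generate:
  assumes \<rho>: "right_action G m \<rho>" "right_action G m \<rho>'" and S: "S \<subseteq> carrier G"
    and gens: "\<And>s. s \<in> S \<Longrightarrow> \<rho> s = \<rho>' s \<and> \<rho> (inv s) = \<rho>' (inv s)"
    and g: "g \<in> generate G S"
  shows "\<rho> g = \<rho>' g"
  using g
proof (induction g rule: generate.induct)
  case one
  then show ?case using \<rho> by (simp add: right_action_def)
next
  case (incl h)
  then show ?case using gens by blast
next
  case (inv h)
  then show ?case using gens by blast
next
  case (eng h1 h2)
  then have "h1 \<in> carrier G" "h2 \<in> carrier G"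
    using generate_in_carrier[OF S] by auto
  then show ?case using eng.IH \<rho> by (simp add: right_action_def)
qed

lemma (in group) rcosets_mult_closed:
  assumes "subgroup K G" "C \<in> rcosets K" "g \<in> carrier G"
  shows "C #> g \<in> rcosets K"
proof -
  obtain x where "x \<in> carrier G" "C = K #> x"
    using assms(2) unfolding RCOSETS_def by blast
  then show ?thesis
    using coset_mult_assoc rcosetsI subgroup.subset[OF assms(1)] assms(3) by simp
qed

lemma (in group) right_action_rcosets:
  assumes K: "subgroup K G" and e: "bij_betw e (rcosets K) {..<m}"
  shows "right_action G m (\<lambda>g. \<lambda>i\<in>{..<m}. e (inv_into (rcosets K) e i #> g))"
proof -
  let ?e' = "inv_into (rcosets K) e"
  have e'_in: "?e' i \<in> rcosets K" if "i < m" for i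
    using bij_betwE[OF bij_betw_inv_into[OF e]] that by simp
  have e_e': "e (?e' i) = i" if "i < m" for i
    using e that unfolding bij_betw_def by (simp add: f_inv_into_f)
  have e'_e: "?e' (e C) = C" if "C \<in> rcosets K" for C
    using inv_into_f_f[OF bij_betw_imp_inj_on[OF e] that] .
  have e_lt: "e C < m" if "C \<in> rcosets K" for C
    using bij_betwE[OF e] that by simp
  have C_sub: "C \<subseteq> carrier G" if "C \<in> rcosets K" for C
    using subgroup.rcosets_carrier[OF K is_group that] .
  show ?thesis
    unfolding right_action_def
  proof (intro conjI ballI)
    show "(\<lambda>i\<in>{..<m}. e (?e' i #> g)) \<in> {..<m} \<rightarrow>\<^sub>E {..<m}" if "g \<in> carrier G" for g
      using e'_in rcosets_mult_closed[OF K] e_lt that by auto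
    show "(\<lambda>i\<in>{..<m}. e (?e' i #> \<one>)) = (\<lambda>i\<in>{..<m}. i)"
      using e'_in e_e' C_sub by (auto simp: fun_eq_iff)
    show "(\<lambda>i\<in>{..<m}. e (?e' i #> g \<otimes> h))
          = compose {..<m} (\<lambda>i\<in>{..<m}. e (?e' i #> h)) (\<lambda>i\<in>{..<m}. e (?e' i #> g))"
      if "g \<in> carrier G" "h \<in> carrier G" for g h
    proof
      fix i
      show "(\<lambda>i\<in>{..<m}. e (?e' i #> g \<otimes> h)) i
          = compose {..<m} (\<lambda>i\<in>{..<m}. e (?e' i #> h)) (\<lambda>i\<in>{..<m}. e (?e' i #> g)) i"
      proof (cases "i < m")
        case True
        have "?e' i #> g \<in> rcosets K" using rcosets_mult_closed[OF K e'_in[OF True] that(1)] .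
        then show ?thesis
          using True e_lt e'_e coset_mult_assoc[OF C_sub[OF e'_in[OF True]] that]
          by (simp add: compose_def)
      qed (simp add: compose_def)
    qed
  qed
qed

lemma (in group) finite_index_point_stabilizer:
  assumes K: "subgroup K G" and fin: "finite (rcosets K)"
  defines "m \<equiv> card (rcosets K)"
  obtains \<rho> i0 where "right_action G m \<rho>" "i0 < m"
    "\<And>g. g \<in> carrier G \<Longrightarrow> g \<in> K \<longleftrightarrow> \<rho> g i0 = i0"
proof -
  obtain e where e: "bij_betw e (rcosets K) {..<m}"
    using ex_bij_betw_finite_nat[OF fin] unfolding m_def atLeast0LessThan by blast
  have K_coset: "K \<in> rcosets K"
    using rcosetsI[OF subgroup.subset[OF K] one_closed] subgroup.subset[OF K] by simp
  let ?\<rho> = "\<lambda>g. \<lambda>i\<in>{..<m}. e (inv_into (rcosets K) e i #> g)"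
  show thesis
  proof
    show "right_action G m ?\<rho>" using right_action_rcosets[OF K e] .
    show "e K < m" using bij_betwE[OF e] K_coset by simp
    show "g \<in> K \<longleftrightarrow> ?\<rho> g (e K) = e K" if "g \<in> carrier G" for g
    proof -
      have "?\<rho> g (e K) = e (K #> g)"
        using bij_betwE[OF e] K_coset inv_into_f_f[OF bij_betw_imp_inj_on[OF e] K_coset] by simp
      moreover have "e (K #> g) = e K \<longleftrightarrow> K #> g = K"
        using inj_on_eq_iff[OF bij_betw_imp_inj_on[OF e] rcosets_mult_closed[OF K K_coset that] K_coset] .
      moreover have "K #> g = K \<longleftrightarrow> g \<in> K"
        using coset_join1[OF _ that K] coset_join2[OF that K] by blast
      ultimately show ?thesis by simp
    qed
  qed
qed

lemma (in group) finite_subgroups_of_index: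
  assumes S: "finite S" "S \<subseteq> carrier G" "generate G S = carrier G"
  shows "finite {K. subgroup K G \<and> finite (rcosets K) \<and> card (rcosets K) = m}"
proof -
  let ?K = "{K. subgroup K G \<and> finite (rcosets K) \<and> card (rcosets K) = m}"
  have "\<forall>K\<in>?K. \<exists>\<rho> i0. right_action G m \<rho> \<and> i0 < m \<and> (\<forall>g\<in>carrier G. g \<in> K \<longleftrightarrow> \<rho> g i0 = i0)"
  proof
    fix K assume K: "K \<in> ?K"
    have "subgroup K G" "finite (rcosets K)" "card (rcosets K) = m"
      using K by auto
    then obtain \<rho> i0 where "right_action G m \<rho>" "i0 < m" "\<And>g. g \<in> carrier G \<Longrightarrow> g \<in> K \<longleftrightarrow> \<rho> g i0 = i0"
      using finite_index_point_stabilizer by metis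
    then show "\<exists>\<rho> i0. right_action G m \<rho> \<and> i0 < m \<and> (\<forall>g\<in>carrier G. g \<in> K \<longleftrightarrow> \<rho> g i0 = i0)"
      by blast
  qed
  from bchoice[OF this] obtain \<rho> where "\<forall>K\<in>?K. \<exists>i0. right_action G m (\<rho> K) \<and> i0 < m \<and>
      (\<forall>g\<in>carrier G. g \<in> K \<longleftrightarrow> \<rho> K g i0 = i0)" ..
  from bchoice[OF this] obtain i0 where code: "\<forall>K\<in>?K. right_action G m (\<rho> K) \<and> i0 K < m \<and>
      (\<forall>g\<in>carrier G. g \<in> K \<longleftrightarrow> \<rho> K g (i0 K) = i0 K)" ..
  define S' where "S' = S \<union> (\<lambda>s. inv s) ` S"
  have S': "S' \<subseteq> carrier G" "finite S'"
    using S(1,2) unfolding S'_def by auto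
  let ?\<Phi> = "\<lambda>K. (restrict (\<rho> K) S', i0 K)"
  have "inj_on ?\<Phi> ?K"
  proof (rule inj_onI)
    fix K K' assume K: "K \<in> ?K" and K': "K' \<in> ?K" and eq: "?\<Phi> K = ?\<Phi> K'"
    have restrict_eq: "restrict (\<rho> K) S' = restrict (\<rho> K') S'" and "i0 K = i0 K'"
      using eq by simp_all
    have "\<rho> K s = \<rho> K' s" if "s \<in> S'" for s
      using fun_cong[OF restrict_eq, of s] that by simp
    then have gens: "\<rho> K s = \<rho> K' s \<and> \<rho> K (inv s) = \<rho> K' (inv s)" if "s \<in> S" for s
      using that unfolding S'_def by blast
    have "\<rho> K g = \<rho> K' g" if "g \<in> carrier G" for g
      using code K K' S(2) gens that[folded S(3)] by (intro right_action_eq_on_generate) auto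
    then have "g \<in> K \<longleftrightarrow> g \<in> K'" if "g \<in> carrier G" for g
      using that code K K' \<open>i0 K = i0 K'\<close> by simp
    moreover have "K \<subseteq> carrier G" "K' \<subseteq> carrier G"
      using K K' subgroup.subset by blast+
    ultimately show "K = K'" by blast
  qed
  moreover have "?\<Phi> ` ?K \<subseteq> (S' \<rightarrow>\<^sub>E ({..<m} \<rightarrow>\<^sub>E {..<m})) \<times> {..<m}"
  proof (rule image_subsetI)
    fix K assume "K \<in> ?K"
    then have "right_action G m (\<rho> K)" "i0 K < m" using code by blast+
    then show "?\<Phi> K \<in> (S' \<rightarrow>\<^sub>E ({..<m} \<rightarrow>\<^sub>E {..<m})) \<times> {..<m}"
      using S'(1) unfolding right_action_def by auto
  qed
  moreover have "finite ((S' \<rightarrow>\<^sub>E ({..<m} \<rightarrow>\<^sub>E {..<m})) \<times> {..<m})"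
    using S'(2) by (intro finite_cartesian_product finite_PiE) auto
  ultimately show ?thesis
    by (meson finite_imageD finite_subset)
qed

lemma (in group) invariant_normal_subgroup_of_finite_index:
  assumes S: "finite S" "S \<subseteq> carrier G" "generate G S = carrier G"
    and \<psi>: "\<psi> \<in> hom G G" and N: "N \<lhd> G" "finite (rcosets N)"
  obtains M where "M \<lhd> G" "finite (rcosets M)" "M \<subseteq> N" "\<psi> ` M \<subseteq> M"
proof -
  define K where "K n = {x \<in> carrier G. (\<psi> ^^ n) x \<in> N}" for n
  have K_normal: "K n \<lhd> G" for n
    unfolding K_def using normal_preimage[OF funpow_hom[OF \<psi>] is_group N(1)] .
  have K_index: "finite (rcosets (K n)) \<and> card (rcosets (K n)) \<le> card (rcosets N)" for n
    using index_preimage_le[OF funpow_hom[OF \<psi>] is_group normal_imp_subgroup[OF N(1)] N(2)]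
    unfolding K_def by blast
  have "range K \<subseteq> (\<Union>m\<le>card (rcosets N). {H. subgroup H G \<and> finite (rcosets H) \<and> card (rcosets H) = m})"
  proof
    fix H assume "H \<in> range K"
    then obtain n where "H = K n" by blast
    then show "H \<in> (\<Union>m\<le>card (rcosets N). {H. subgroup H G \<and> finite (rcosets H) \<and> card (rcosets H) = m})"
      using K_index[of n] normal_imp_subgroup[OF K_normal] by auto
  qed
  then have "finite (range K)"
    by (rule finite_subset) (use finite_subgroups_of_index[OF S] in simp)
  moreover have "H \<lhd> G \<and> finite (rcosets H)" if "H \<in> range K" for H
    using that K_normal K_index by blast
  ultimately have M: "carrier G \<inter> \<Inter>(range K) \<lhd> G" "finite (rcosets (carrier G \<inter> \<Inter>(range K)))"
    using normal_Inter_finite_index by blast+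
  show thesis
  proof (rule that[OF M])
    have "K 0 \<subseteq> N" by (auto simp: K_def)
    then show "carrier G \<inter> \<Inter>(range K) \<subseteq> N" by blast
    show "\<psi> ` (carrier G \<inter> \<Inter>(range K)) \<subseteq> carrier G \<inter> \<Inter>(range K)"
    proof (rule image_subsetI)
      fix x assume x: "x \<in> carrier G \<inter> \<Inter>(range K)"
      have "(\<psi> ^^ n) (\<psi> x) \<in> N" for n
      proof -
        have "(\<psi> ^^ Suc n) x \<in> N" using x unfolding K_def by blast
        then show ?thesis by (simp only: funpow_Suc_right o_apply)
      qed
      then show "\<psi> x \<in> carrier G \<inter> \<Inter>(range K)"
        using x hom_in_carrier[OF \<psi>] unfolding K_def by auto
    qed
  qed
qed

section \<open>Quotients by invariant normal subgroups\<close>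

lemma twisted_conj_image:
  assumes G: "group G" and H: "group H" and f: "f \<in> hom G H" "f ` carrier G = carrier H"
    and \<phi>: "\<phi> \<in> hom G G" and equivariant: "\<And>h. h \<in> carrier G \<Longrightarrow> f (\<phi> h) = \<psi> (f h)"
    and x: "x \<in> carrier G"
  shows "f ` (twisted_conj G \<phi> `` {x}) = twisted_conj H \<psi> `` {f x}"
proof -
  interpret f: group_hom G H f
    using G H f(1) by (simp add: group_hom_def group_hom_axioms_def)
  have f_twist: "f (h \<otimes>\<^bsub>G\<^esub> x \<otimes>\<^bsub>G\<^esub> inv\<^bsub>G\<^esub> (\<phi> h)) = f h \<otimes>\<^bsub>H\<^esub> f x \<otimes>\<^bsub>H\<^esub> inv\<^bsub>H\<^esub> (\<psi> (f h))"
    if "h \<in> carrier G" for h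
    using that x hom_in_carrier[OF \<phi>] equivariant by simp
  show ?thesis
  proof
    show "f ` (twisted_conj G \<phi> `` {x}) \<subseteq> twisted_conj H \<psi> `` {f x}"
    proof
      fix y assume "y \<in> f ` (twisted_conj G \<phi> `` {x})"
      then obtain h where h: "h \<in> carrier G" "y = f (h \<otimes>\<^bsub>G\<^esub> x \<otimes>\<^bsub>G\<^esub> inv\<^bsub>G\<^esub> (\<phi> h))"
        unfolding twisted_conj_def by blast
      have "y \<in> carrier H"
        using h x hom_in_carrier[OF \<phi>] by simp
      moreover have "y = f h \<otimes>\<^bsub>H\<^esub> f x \<otimes>\<^bsub>H\<^esub> inv\<^bsub>H\<^esub> (\<psi> (f h))"
        using h f_twist by simp
      moreover have "f x \<in> carrier H" "f h \<in> carrier H"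
        using h(1) x by simp_all
      ultimately show "y \<in> twisted_conj H \<psi> `` {f x}"
        unfolding twisted_conj_def by blast
    qed
    show "twisted_conj H \<psi> `` {f x} \<subseteq> f ` (twisted_conj G \<phi> `` {x})"
    proof
      fix y assume "y \<in> twisted_conj H \<psi> `` {f x}"
      then obtain k where k: "k \<in> carrier H" "y = k \<otimes>\<^bsub>H\<^esub> f x \<otimes>\<^bsub>H\<^esub> inv\<^bsub>H\<^esub> (\<psi> k)"
        unfolding twisted_conj_def by blast
      then obtain h where h: "h \<in> carrier G" "k = f h" using f(2) by blast
      then have "y = f (h \<otimes>\<^bsub>G\<^esub> x \<otimes>\<^bsub>G\<^esub> inv\<^bsub>G\<^esub> (\<phi> h))" using k f_twist by simp
      moreover have "(x, h \<otimes>\<^bsub>G\<^esub> x \<otimes>\<^bsub>G\<^esub> inv\<^bsub>G\<^esub> (\<phi> h)) \<in> twisted_conj G \<phi>"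
        using h x hom_in_carrier[OF \<phi>] G by (auto simp: twisted_conj_def intro: group.inv_closed)
      ultimately show "y \<in> f ` (twisted_conj G \<phi> `` {x})" by blast
    qed
  qed
qed

lemma reidemeister_classes_eq_image:
  "reidemeister_classes G \<phi> = (\<lambda>x. twisted_conj G \<phi> `` {x}) ` carrier G"
  by (auto simp: reidemeister_classes_def quotient_def)

lemma reidemeister_classes_image:
  assumes "group G" "group H" "f \<in> hom G H" "f ` carrier G = carrier H"
    and "\<phi> \<in> hom G G" "\<And>h. h \<in> carrier G \<Longrightarrow> f (\<phi> h) = \<psi> (f h)"
  shows "reidemeister_classes H \<psi> = (\<lambda>C. f ` C) ` reidemeister_classes G \<phi>"
proof -
  have "reidemeister_classes H \<psi> = (\<lambda>x. twisted_conj H \<psi> `` {f x}) ` carrier G"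
    by (simp add: reidemeister_classes_eq_image image_image flip: assms(4))
  also have "\<dots> = (\<lambda>x. f ` (twisted_conj G \<phi> `` {x})) ` carrier G"
    using twisted_conj_image[OF assms] by simp
  also have "\<dots> = (\<lambda>C. f ` C) ` reidemeister_classes G \<phi>"
    unfolding reidemeister_classes_eq_image[of G] image_image ..
  finally show ?thesis .
qed

lemma twisted_stab_image:
  assumes "group G" "group H" "f \<in> hom G H"
    and "\<phi> \<in> hom G G" "\<And>h. h \<in> carrier G \<Longrightarrow> f (\<phi> h) = \<psi> (f h)" "g \<in> carrier G"
  shows "f ` twisted_stab G \<phi> g \<subseteq> twisted_stab H \<psi> (f g)"
proof -
  interpret f: group_hom G H f
    using assms(1-3) by (simp add: group_hom_def group_hom_axioms_def)
  show ?thesis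
  proof
    fix y assume "y \<in> f ` twisted_stab G \<phi> g"
    then obtain b where b: "b \<in> carrier G" "g = b \<otimes>\<^bsub>G\<^esub> g \<otimes>\<^bsub>G\<^esub> inv\<^bsub>G\<^esub> (\<phi> b)" "y = f b"
      unfolding twisted_stab_def by blast
    have "f g = f (b \<otimes>\<^bsub>G\<^esub> g \<otimes>\<^bsub>G\<^esub> inv\<^bsub>G\<^esub> (\<phi> b))"
      using b(2) by (rule arg_cong)
    also have "\<dots> = f b \<otimes>\<^bsub>H\<^esub> f g \<otimes>\<^bsub>H\<^esub> inv\<^bsub>H\<^esub> (\<psi> (f b))"
      using b(1) assms(5,6) hom_in_carrier[OF assms(4)] by simp
    finally have "f g = f b \<otimes>\<^bsub>H\<^esub> f g \<otimes>\<^bsub>H\<^esub> inv\<^bsub>H\<^esub> (\<psi> (f b))" .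
    moreover have "f b \<in> carrier H" using b(1) by simp
    ultimately show "y \<in> twisted_stab H \<psi> (f g)"
      unfolding twisted_stab_def b(3) by blast
  qed
qed

definition induced_endo :: "('a, 'b) monoid_scheme \<Rightarrow> 'a set \<Rightarrow> ('a \<Rightarrow> 'a) \<Rightarrow> 'a set \<Rightarrow> 'a set" where
  "induced_endo G N \<phi> C = (\<Union>x\<in>C. N #>\<^bsub>G\<^esub> \<phi> x)"

lemma (in normal) induced_endo_rcos:
  assumes \<phi>: "\<phi> \<in> hom G G" and invariant: "\<phi> ` H \<subseteq> H" and a: "a \<in> carrier G"
  shows "induced_endo G H \<phi> (H #> a) = H #> \<phi> a"
proof -
  interpret \<phi>: group_hom G G \<phi>
    using \<phi> by (simp add: group_hom_def group_hom_axioms_def is_group)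
  have "H #> \<phi> x = H #> \<phi> a" if "x \<in> H #> a" for x
  proof -
    have x: "x \<in> carrier G" using that a elemrcos_carrier is_group by blast
    have "x \<otimes> inv a \<in> H" using rcos_module_imp[OF is_group a that] .
    then have "\<phi> (x \<otimes> inv a) \<in> H" using invariant by blast
    then have "\<phi> x \<otimes> inv (\<phi> a) \<in> H"
      using x a by simp
    then show ?thesis
      using rcos_eq_iff[OF subgroup_axioms] x a hom_in_carrier[OF \<phi>] by blast
  qed
  moreover have "a \<in> H #> a" using rcos_self[OF a subgroup_axioms] .
  ultimately show ?thesis unfolding induced_endo_def by blast
qed

lemma (in normal) induced_endo_hom:
  assumes \<phi>: "\<phi> \<in> hom G G" and invariant: "\<phi> ` H \<subseteq> H"
  shows "induced_endo G H \<phi> \<in> hom (G Mod H) (G Mod H)"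
proof (rule homI)
  fix C assume "C \<in> carrier (G Mod H)"
  then obtain a where "a \<in> carrier G" "C = H #> a" by (auto simp: carrier_FactGroup)
  then show "induced_endo G H \<phi> C \<in> carrier (G Mod H)"
    using induced_endo_rcos[OF assms] hom_in_carrier[OF \<phi>] by (auto simp: carrier_FactGroup)
next
  fix C D assume "C \<in> carrier (G Mod H)" "D \<in> carrier (G Mod H)"
  then obtain a b where ab: "a \<in> carrier G" "C = H #> a" "b \<in> carrier G" "D = H #> b"
    by (auto simp: carrier_FactGroup)
  then show "induced_endo G H \<phi> (C \<otimes>\<^bsub>G Mod H\<^esub> D)
      = induced_endo G H \<phi> C \<otimes>\<^bsub>G Mod H\<^esub> induced_endo G H \<phi> D"
    using induced_endo_rcos[OF assms] hom_in_carrier[OF \<phi>]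
    by (simp add: rcos_sum hom_mult[OF \<phi>])
qed

lemma (in normal) reidemeister_classes_Mod:
  assumes "\<phi> \<in> hom G G" "\<phi> ` H \<subseteq> H"
  shows "reidemeister_classes (G Mod H) (induced_endo G H \<phi>)
         = (\<lambda>C. (\<lambda>x. H #> x) ` C) ` reidemeister_classes G \<phi>"
  using induced_endo_rcos[OF assms]
  by (intro reidemeister_classes_image[OF is_group factorgroup_is_group r_coset_hom_Mod _ assms(1)])
    (simp_all add: carrier_FactGroup)

lemma (in normal) twisted_stab_Mod:
  assumes "\<phi> \<in> hom G G" "\<phi> ` H \<subseteq> H" "g \<in> carrier G"
  shows "(\<lambda>x. H #> x) ` twisted_stab G \<phi> g \<subseteq> twisted_stab (G Mod H) (induced_endo G H \<phi>) (H #> g)"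
  using induced_endo_rcos[OF assms(1,2)]
  by (intro twisted_stab_image[OF is_group factorgroup_is_group r_coset_hom_Mod assms(1) _ assms(3)])
    simp

theorem mainTheorem10:
  fixes G (structure) and \<phi> :: "'a \<Rightarrow> 'a"
  assumes "group G"
    and "fin_gen_group G"
    and "residually_finite G"
    and "\<phi> \<in> iso G G"
    and "g \<in> carrier G"
    and "infinite (twisted_stab G \<phi> g)"
  shows "infinite (reidemeister_classes G \<phi>)"
proof
  assume finite_classes: "finite (reidemeister_classes G \<phi>)"
  interpret group G by (rule assms(1))
  have \<phi>: "\<phi> \<in> hom G G" using assms(4) by (simp add: iso_def)
  obtain S where S: "finite S" "S \<subseteq> carrier G" "generate G S = carrier G"
    using assms(2) unfolding fin_gen_group_def by blast
  from twisted_stab_card_bounded[of "card (reidemeister_classes G \<phi>)"]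
  obtain B where B: "\<forall>(Q :: 'a set monoid) \<psi> x. group Q \<longrightarrow> finite (carrier Q) \<longrightarrow> \<psi> \<in> hom Q Q \<longrightarrow>
      card (reidemeister_classes Q \<psi>) \<le> card (reidemeister_classes G \<phi>) \<longrightarrow> x \<in> carrier Q \<longrightarrow>
      card (twisted_stab Q \<psi> x) \<le> B" ..
  obtain T where T: "finite T" "card T = Suc B" "T \<subseteq> twisted_stab G \<phi> g"
    using infinite_arbitrarily_large[OF assms(6)] by auto
  have T_carrier: "T \<subseteq> carrier G"
    using T(3) twisted_stab_subset by (rule subset_trans)
  obtain N where N: "N \<lhd> G" "finite (rcosets N)" "inj_on (\<lambda>t. N #> t) T"
    using residually_finite_separates[OF assms(3) T(1) T_carrier] .
  obtain M where M: "M \<lhd> G" "finite (rcosets M)" "M \<subseteq> N" "\<phi> ` M \<subseteq> M"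
    using invariant_normal_subgroup_of_finite_index[OF S \<phi> N(1,2)] .
  interpret M: normal M G by (rule M(1))
  let ?\<psi> = "induced_endo G M \<phi>"
  have "Suc B = card ((\<lambda>t. M #> t) ` T)"
    using inj_on_rcos_subgroup[OF M.subgroup_axioms normal_imp_subgroup[OF N(1)] M(3) T_carrier N(3)]
      T(2) by (simp add: card_image)
  also have "\<dots> \<le> card (twisted_stab (G Mod M) ?\<psi> (M #> g))"
    using M.twisted_stab_Mod[OF \<phi> M(4) assms(5)] T(3) M(2)
    by (intro card_mono finite_subset[OF twisted_stab_subset]) (auto simp: FactGroup_def)
  also have "\<dots> \<le> B"
  proof (rule B[rule_format, OF M.factorgroup_is_group _ M.induced_endo_hom[OF \<phi> M(4)]])
    show "finite (carrier (G Mod M))" "M #> g \<in> carrier (G Mod M)"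
      using M(2) rcosetsI[OF M.subset assms(5)] by (simp_all add: FactGroup_def)
    show "card (reidemeister_classes (G Mod M) ?\<psi>) \<le> card (reidemeister_classes G \<phi>)"
      using card_image_le[OF finite_classes] M.reidemeister_classes_Mod[OF \<phi> M(4)] by simp
  qed
  finally show False by simp
qed

end
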